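(* Let $P$ be a poset and $\Lambda$ an $\mathbb{R}$-action on $P$. Let $I$ be an interval of $P$, let $\epsilon\ge0$ and $p\in P$. If $p\in I^\uparrow$ and $\Lambda_\epsilon(p)\in\Lambda_\epsilon(I)^\downarrow$, then $p\in I$.
   Context: An interval of a poset $P$ is a nonempty subset that is convex ($p,q\in I$, $p\le r\le q$ imply $r\in I$) and connected (any two elements are joined by a finite sequence of elements of $I$ with consecutive ones comparable). For $A\subseteq P$, $A^\uparrow=\{p:\exists a\in A,\ a\le p\}$ and $A^\downarrow=\{p:\exists a\in A,\ p\le a\}$. An $\mathbb{R}$-action on $P$ is a family $\{\Lambda_\epsilon\}_{\epsilon\ge0}$ of poset automorphisms of $P$ with $p\le\Lambda_\epsilon(p)$ for all $p$, $\Lambda_0=\mathrm{id}$, and $\Lambda_\epsilon\circ\Lambda_\zeta=\Lambda_{\epsilon+\zeta}$. *)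

theory Defs
  imports Main "HOL-Library.Library"
begin

definition poset_automorphism :: "('a::order \<Rightarrow> 'a) \<Rightarrow> bool" where
  "poset_automorphism f \<longleftrightarrow> bij f \<and> (\<forall>x y. x \<le> y \<longleftrightarrow> f x \<le> f y)"

definition R_action :: "(real \<Rightarrow> 'a::order \<Rightarrow> 'a) \<Rightarrow> bool" where
  "R_action \<Lambda> \<longleftrightarrow>
     (\<forall>e\<ge>0. poset_automorphism (\<Lambda> e)) \<and>
     (\<forall>e\<ge>0. \<forall>p. p \<le> \<Lambda> e p) \<and>
     \<Lambda> 0 = id \<and>
     (\<forall>e\<ge>0. \<forall>z\<ge>0. \<Lambda> e \<circ> \<Lambda> z = \<Lambda> (e + z))"

definition convex_set :: "'a::order set \<Rightarrow> bool" where
  "convex_set I \<longleftrightarrow> (\<forall>p\<in>I. \<forall>q\<in>I. \<forall>r. p \<le> r \<and> r \<le> q \<longrightarrow> r \<in> I)"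

definition order_connected :: "'a::order set \<Rightarrow> bool" where
  "order_connected I \<longleftrightarrow> (\<forall>x\<in>I. \<forall>y\<in>I. \<exists>xs. xs \<noteq> [] \<and> hd xs = x \<and> last xs = y \<and>
      set xs \<subseteq> I \<and> (\<forall>i. Suc i < length xs \<longrightarrow> xs ! i \<le> xs ! Suc i \<or> xs ! Suc i \<le> xs ! i))"

definition poset_interval :: "'a::order set \<Rightarrow> bool" where
  "poset_interval I \<longleftrightarrow> I \<noteq> {} \<and> convex_set I \<and> order_connected I"

definition up_closure :: "'a::order set \<Rightarrow> 'a set" where
  "up_closure A = {p. \<exists>a\<in>A. a \<le> p}"

definition down_closure :: "'a::order set \<Rightarrow> 'a set" where
  "down_closure A = {p. \<exists>a\<in>A. p \<le> a}"

end

theory Submission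
  imports Defs
begin

text \<open>Only convexity of I and order reflection by \<open>\<Lambda> \<epsilon>\<close> are needed: \<open>\<Lambda> \<epsilon>\<close> pulls the
  upper bound \<open>\<Lambda> \<epsilon> b\<close> of \<open>\<Lambda> \<epsilon> p\<close> back to an upper bound \<open>b \<in> I\<close> of p, so p lies between
  two elements of I.\<close>

lemma convex_set_iff_up_down_closure:
  "convex_set I \<longleftrightarrow> up_closure I \<inter> down_closure I \<subseteq> I"
  unfolding convex_set_def up_closure_def down_closure_def by blast

lemma down_closure_image_reflect:
  assumes "\<And>x y. f x \<le> f y \<Longrightarrow> x \<le> y" and "f p \<in> down_closure (f ` A)"
  shows "p \<in> down_closure A"
  using assms unfolding down_closure_def by blast

lemma R_action_le_iff:
  assumes "R_action \<Lambda>" and "e \<ge> 0"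
  shows "\<Lambda> e x \<le> \<Lambda> e y \<longleftrightarrow> x \<le> y"
  using assms unfolding R_action_def poset_automorphism_def by blast

theorem proposition2p13:
  fixes \<Lambda> :: "real \<Rightarrow> 'a::order \<Rightarrow> 'a" and I :: "'a set" and \<epsilon> :: real and p :: 'a
  assumes "R_action \<Lambda>" and "poset_interval I" and "\<epsilon> \<ge> 0"
    and "p \<in> up_closure I" and "\<Lambda> \<epsilon> p \<in> down_closure (\<Lambda> \<epsilon> ` I)"
  shows "p \<in> I"
proof -
  have "p \<in> down_closure I"
    using down_closure_image_reflect[OF _ assms(5)] R_action_le_iff[OF assms(1,3)] by blast
  moreover have "convex_set I"
    using assms(2) unfolding poset_interval_def by blast
  ultimately show ?thesis
    using assms(4) convex_set_iff_up_down_closure by blast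
qed

end
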